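(* Let $r$ be a positive integer such that $r+1$ is a prime that is not a Mersenne prime. Let $N$ be a positive integer and let $q_0,q_1,\ldots,q_N$ be distinct primes with $\operatorname{ord}_{q_n}(r+1)=2^n$ for $1\le n\le N$ and $\operatorname{ord}_{q_0}(r+1)=2^N$. Let $M=\prod_{i=0}^N q_i$, and let $A$ be the set of positive integers $x$ satisfying $x+r\equiv 0\pmod{q_0}$ and $(r+1)^{2^{n-1}}x+r\equiv 0\pmod{q_n}$ for all $n\in\{1,\ldots,N\}$. Let $B=\ell_1^{\beta_1}\cdots\ell_s^{\beta_s}$, where $\ell_1,\ldots,\ell_s$ are distinct primes, each greater than $r$ and congruent to $1$ modulo $M$, and $\beta_1,\ldots,\beta_s$ are positive integers. Let $p>M$ be a prime in $A$ such that $(r+1)^{\alpha}p\in G_r$ for all nonnegative integers $\alpha$, and such that $p-r$ has a prime divisor $P$ with $P\nmid (r+1)B$. Then $(r+1)^{\alpha}Bp\in G_r$ for all nonnegative integers $\alpha$.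
   Context: For a positive integer $r$, the $r$-th Schemmel totient function $S_r:\mathbb{N}\to\mathbb{N}_0$ is the multiplicative arithmetic function (so $S_r(1)=1$ and $S_r(ab)=S_r(a)S_r(b)$ for coprime $a,b$) defined on prime powers by $S_r(p^{\alpha})=0$ if $p\le r$ and $S_r(p^\alpha)=p^{\alpha-1}(p-r)$ if $p>r$, for all primes $p$ and positive integers $\alpha$. $G_r$ denotes the set of positive integers not in the range of $S_r$. $\operatorname{ord}_q(a)$ denotes the multiplicative order of $a$ modulo the prime $q$. *)

theory Defs
  imports "HOL-Number_Theory.Number_Theory"
begin

text \<open>The r-th Schemmel totient: multiplicative, with value 0 on p^a for p \<le> r
  and p^(a-1)(p-r) for p > r. (Value at 0 is irrelevant; only positive arguments are used.)\<close>
definition schemmel :: "nat \<Rightarrow> nat \<Rightarrow> nat" where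
  "schemmel r n = (\<Prod>p\<in>prime_factors n.
      if p \<le> r then 0 else p ^ (multiplicity p n - 1) * (p - r))"

definition G :: "nat \<Rightarrow> nat set" where
  "G r = {m. m > 0 \<and> \<not> (\<exists>n>0. schemmel r n = m)}"

definition mersenne_prime :: "nat \<Rightarrow> bool" where
  "mersenne_prime m \<longleftrightarrow> prime m \<and> (\<exists>k. m = 2 ^ k - 1)"

end

theory Submission
  imports Defs
begin

text \<open>
  Suppose S_r(n) = (r+1)^\<alpha> B p. The prime p divides a local factor x^(a-1) (x - r)
  of S_r(n), where x > r is a prime. If x = p, then p - r, and with it P, divides
  (r+1)^\<alpha> B. Otherwise p divides x - r, so x = (r+1)^k d p + r with d dividing B,
  hence d \<equiv> 1 (mod M). Because the orders of r+1 modulo the q_i make the residue classes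
  of k modulo 2^N, 2, 4, ..., 2^N a covering system, the congruences defining A force
  some q_j to divide x, i.e. x = q_j \<le> M < p \<le> x. The argument never needs that r+1
  is not a Mersenne prime or that (r+1)^\<alpha> p \<in> G_r.
\<close>

lemma not_pow2_dvd_imp_cong_pow2:
  fixes k N :: nat
  assumes "\<not> 2 ^ N dvd k"
  obtains v where "v < N" "[k = 2 ^ v] (mod 2 ^ (v + 1))"
proof -
  have "k \<noteq> 0" using assms by (metis dvd_0_right)
  then obtain y where k: "k = 2 ^ multiplicity 2 k * y" and "odd y"
    using multiplicity_decompose'[of k 2] by auto
  define v where "v = multiplicity 2 k"
  obtain t where "y = 2 * t + 1" using \<open>odd y\<close> by (metis oddE)
  then have "k = 2 ^ v + 2 ^ (v + 1) * t" using k v_def by (simp add: algebra_simps)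
  then have "[k = 2 ^ v] (mod 2 ^ (v + 1))" by (simp add: cong_def)
  moreover have "v < N"
  proof (rule ccontr)
    assume "\<not> v < N"
    then have "(2::nat) ^ N dvd 2 ^ v" by (simp add: le_imp_power_dvd)
    with k v_def assms show False by (metis dvd_mult2)
  qed
  ultimately show thesis using that by blast
qed

lemma cong_pow_if_cong_ord:
  fixes a k e m :: nat
  assumes "ord m a > 0" "[k = e] (mod ord m a)"
  shows "[a ^ k = a ^ e] (mod m)"
  using assms order_divides_expdiff ord_gt_0_iff by blast

lemma covering_by_power_orders:
  fixes a c x k N :: nat and q :: "nat \<Rightarrow> nat"
  assumes ord_q: "\<forall>n\<in>{1..N}. ord (q n) a = 2 ^ n"
    and ord_q0: "ord (q 0) a = 2 ^ N"
    and cong_q0: "[x + c = 0] (mod q 0)"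
    and cong_q: "\<forall>n\<in>{1..N}. [a ^ (2 ^ (n - 1)) * x + c = 0] (mod q n)"
  shows "\<exists>j\<in>{0..N}. [a ^ k * x + c = 0] (mod q j)"
proof (cases "2 ^ N dvd k")
  case True
  then have "[k = 0] (mod ord (q 0) a)" by (simp add: ord_q0 cong_0_iff)
  then have "[a ^ k = a ^ 0] (mod q 0)" by (rule cong_pow_if_cong_ord[rotated]) (simp add: ord_q0)
  then have "[a ^ k * x + c = a ^ 0 * x + c] (mod q 0)"
    by (rule cong_add[OF cong_scalar_right cong_refl])
  moreover have "[a ^ 0 * x + c = 0] (mod q 0)" using cong_q0 by simp
  ultimately have "[a ^ k * x + c = 0] (mod q 0)" by (rule cong_trans)
  then show ?thesis by (intro bexI[of _ 0]) auto
next
  case False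
  then obtain v where "v < N" and k: "[k = 2 ^ v] (mod 2 ^ (v + 1))"
    by (rule not_pow2_dvd_imp_cong_pow2)
  then have v: "v + 1 \<in> {1..N}" by simp
  then have "ord (q (v + 1)) a = 2 ^ (v + 1)" using ord_q by blast
  then have "[a ^ k = a ^ (2 ^ v)] (mod q (v + 1))"
    using k by (intro cong_pow_if_cong_ord) simp_all
  then have "[a ^ k * x + c = a ^ (2 ^ v) * x + c] (mod q (v + 1))"
    by (rule cong_add[OF cong_scalar_right cong_refl])
  moreover have "[a ^ (2 ^ v) * x + c = 0] (mod q (v + 1))"
    using bspec[OF cong_q v] by simp
  ultimately have "[a ^ k * x + c = 0] (mod q (v + 1))" by (rule cong_trans)
  then show ?thesis using v by (intro bexI[of _ "v + 1"]) auto
qed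

lemma cong_1_if_dvd_prod_prime_powers:
  fixes L :: "nat set" and \<beta> :: "nat \<Rightarrow> nat" and M d :: nat
  assumes "finite L"
    and L_primes: "\<forall>l\<in>L. prime l \<and> [l = 1] (mod M)"
    and d: "d dvd (\<Prod>l\<in>L. l ^ \<beta> l)"
  shows "[d = 1] (mod M)"
proof -
  have "\<forall>l\<in>L. l \<noteq> 0" using L_primes by (metis not_prime_0)
  then have "(\<Prod>l\<in>L. l ^ \<beta> l) \<noteq> 0" using \<open>finite L\<close> by (metis power_not_zero prod_zero_iff)
  then have "d \<noteq> 0" using d by (metis dvd_0_left)
  have factors_in_L: "x \<in> L" if "x \<in> prime_factors d" for x
  proof -
    have "prime x" "x dvd d"
      using that in_prime_factors_imp_prime in_prime_factors_imp_dvd by blast+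
    have "x dvd (\<Prod>l\<in>L. l ^ \<beta> l)" using \<open>x dvd d\<close> d by (rule dvd_trans)
    then obtain l where "l \<in> L" "x dvd l ^ \<beta> l"
      using prime_dvd_prod_iff[OF \<open>finite L\<close> \<open>prime x\<close>, of "\<lambda>l. l ^ \<beta> l"] by blast
    then have "x dvd l" using \<open>prime x\<close> by (metis prime_dvd_power)
    moreover have "prime l" using \<open>l \<in> L\<close> L_primes by blast
    ultimately show ?thesis using \<open>prime x\<close> \<open>l \<in> L\<close> primes_dvd_imp_eq by metis
  qed
  have "[(\<Prod>x\<in>prime_factors d. x ^ multiplicity x d) = (\<Prod>x\<in>prime_factors d. 1)] (mod M)"
  proof (rule cong_prod)
    fix x assume "x \<in> prime_factors d"
    then have "[x ^ multiplicity x d = 1 ^ multiplicity x d] (mod M)"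
      using factors_in_L L_primes cong_pow by blast
    then show "[x ^ multiplicity x d = 1] (mod M)" by simp
  qed
  then show ?thesis using prod_prime_factors[OF \<open>d \<noteq> 0\<close>] by simp
qed

lemma dvd_prime_power_mult_decompose:
  fixes a e m B :: nat
  assumes "prime a" "e dvd a ^ m * B" "e \<noteq> 0"
  obtains k d where "e = a ^ k * d" "d dvd B"
proof -
  have "\<not> is_unit a" using \<open>prime a\<close> not_prime_unit by blast
  obtain d where e: "e = a ^ multiplicity a e * d" and "\<not> a dvd d"
    using multiplicity_decompose'[OF \<open>e \<noteq> 0\<close> \<open>\<not> is_unit a\<close>] by blast
  then have "coprime d (a ^ m)" using \<open>prime a\<close> by (simp add: prime_imp_coprime coprime_commute)
  have "d dvd e" using e by (metis dvd_triv_right)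
  then have "d dvd a ^ m * B" using assms(2) by (rule dvd_trans)
  then have "d dvd B" using \<open>coprime d (a ^ m)\<close> coprime_dvd_mult_right_iff by blast
  then show thesis using that e by blast
qed

lemma prime_dvd_schemmel_cases:
  fixes r n p :: nat
  assumes "prime p" "p dvd schemmel r n" "schemmel r n \<noteq> 0"
  shows "(r < p \<and> p * (p - r) dvd schemmel r n)
    \<or> (\<exists>x. prime x \<and> r < x \<and> p dvd x - r \<and> x - r dvd schemmel r n)"
proof -
  define f where "f x = (if x \<le> r then 0 else x ^ (multiplicity x n - 1) * (x - r))" for x
  have S: "schemmel r n = (\<Prod>x\<in>prime_factors n. f x)" by (simp add: schemmel_def f_def)
  then have "p dvd (\<Prod>x\<in>prime_factors n. f x)" using assms(2) by simp
  then obtain x where x: "x \<in> prime_factors n" and "p dvd f x"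
    using prime_dvd_prod_iff[OF finite_set_mset assms(1), of f] by blast
  have fx_dvd: "f x dvd schemmel r n" using S x by (simp add: dvd_prodI)
  then have "f x \<noteq> 0" using assms(3) by (metis dvd_0_left)
  then have "r < x" and fx: "f x = x ^ (multiplicity x n - 1) * (x - r)"
    by (auto simp: f_def split: if_splits)
  have "prime x" using x by auto
  show ?thesis
  proof (cases "p dvd x ^ (multiplicity x n - 1)")
    case True
    then have "p dvd x" using assms(1) by (metis prime_dvd_power)
    then have "p = x" using assms(1) \<open>prime x\<close> primes_dvd_imp_eq by metis
    with True assms(1) have "multiplicity x n - 1 \<noteq> 0" by (auto simp: prime_nat_iff)
    then have "p * (p - r) dvd f x" using fx \<open>p = x\<close> by (simp add: mult_dvd_mono)
    then show ?thesis using fx_dvd \<open>r < x\<close> \<open>p = x\<close> dvd_trans by blast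
  next
    case False
    then have "p dvd x - r" using \<open>p dvd f x\<close> fx assms(1) prime_dvd_mult_iff by auto
    moreover have "x - r dvd schemmel r n" using fx fx_dvd dvd_trans by fastforce
    ultimately show ?thesis using \<open>prime x\<close> \<open>r < x\<close> by blast
  qed
qed

lemma schemmel_eq_mult_prime_cases:
  fixes r n X p :: nat
  assumes S: "schemmel r n = X * p" and "prime p" "X > 0"
  shows "(r < p \<and> p - r dvd X) \<or> (\<exists>e. e dvd X \<and> e > 0 \<and> prime (p * e + r))"
proof -
  have "p > 0" using \<open>prime p\<close> by (simp add: prime_gt_0_nat)
  then have "p dvd schemmel r n" "schemmel r n \<noteq> 0" using S \<open>X > 0\<close> by auto
  from prime_dvd_schemmel_cases[OF \<open>prime p\<close> this]
  consider "r < p" "p * (p - r) dvd X * p"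
    | x where "prime x" "r < x" "p dvd x - r" "x - r dvd X * p"
    unfolding S by blast
  then show ?thesis
  proof cases
    case 1
    then show ?thesis using \<open>p > 0\<close> by (simp add: mult.commute)
  next
    case (2 x)
    then obtain e where e: "x - r = p * e" by (auto elim!: dvdE)
    with 2 \<open>p > 0\<close> have "e dvd X" by (simp add: mult.commute)
    moreover have "e > 0" using e \<open>r < x\<close> by (metis mult_0_right gr0I zero_less_diff less_irrefl)
    moreover have "x = p * e + r" using e \<open>r < x\<close> by simp
    ultimately show ?thesis using \<open>prime x\<close> by blast
  qed
qed

lemma prime_covered:
  fixes a c x k d y N :: nat and q :: "nat \<Rightarrow> nat"
  assumes ord_q: "\<forall>n\<in>{1..N}. ord (q n) a = 2 ^ n"
    and ord_q0: "ord (q 0) a = 2 ^ N"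
    and cong_q0: "[x + c = 0] (mod q 0)"
    and cong_q: "\<forall>n\<in>{1..N}. [a ^ (2 ^ (n - 1)) * x + c = 0] (mod q n)"
    and q_prime: "\<forall>i\<in>{0..N}. prime (q i)"
    and d: "[d = 1] (mod (\<Prod>i\<in>{0..N}. q i))"
    and "prime y" and y: "y = a ^ k * d * x + c"
  shows "y \<in> q ` {0..N}"
proof -
  obtain j where j: "j \<in> {0..N}" and "[a ^ k * x + c = 0] (mod q j)"
    using covering_by_power_orders[OF ord_q ord_q0 cong_q0 cong_q] by blast
  moreover have "[d = 1] (mod q j)"
    using d j by (meson cong_dvd_modulus_nat dvd_prodI finite_atLeastAtMost)
  then have "[a ^ k * d * x + c = a ^ k * 1 * x + c] (mod q j)"
    by (intro cong_add cong_mult) auto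
  ultimately have "[y = 0] (mod q j)" using y cong_trans by auto
  then have "q j dvd y" by (simp add: cong_0_iff)
  then have "q j = y" using \<open>prime y\<close> q_prime j by (metis primes_dvd_imp_eq)
  then show ?thesis using j by blast
qed

lemma covered_shift_not_prime:
  fixes a c x e m N :: nat and q :: "nat \<Rightarrow> nat" and L :: "nat set" and \<beta> :: "nat \<Rightarrow> nat"
  assumes "prime a"
    and ord_q: "\<forall>n\<in>{1..N}. ord (q n) a = 2 ^ n"
    and ord_q0: "ord (q 0) a = 2 ^ N"
    and cong_q0: "[x + c = 0] (mod q 0)"
    and cong_q: "\<forall>n\<in>{1..N}. [a ^ (2 ^ (n - 1)) * x + c = 0] (mod q n)"
    and q_prime: "\<forall>i\<in>{0..N}. prime (q i)"
    and "finite L" and L_primes: "\<forall>l\<in>L. prime l \<and> [l = 1] (mod (\<Prod>i\<in>{0..N}. q i))"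
    and x_gt: "x > (\<Prod>i\<in>{0..N}. q i)"
    and e_dvd: "e dvd a ^ m * (\<Prod>l\<in>L. l ^ \<beta> l)" and "e > 0"
  shows "\<not> prime (x * e + c)"
proof
  assume "prime (x * e + c)"
  obtain k d where e: "e = a ^ k * d" and "d dvd (\<Prod>l\<in>L. l ^ \<beta> l)"
    using dvd_prime_power_mult_decompose[OF \<open>prime a\<close> e_dvd] \<open>e > 0\<close> by blast
  then have "[d = 1] (mod (\<Prod>i\<in>{0..N}. q i))"
    using cong_1_if_dvd_prod_prime_powers \<open>finite L\<close> L_primes by blast
  moreover have "x * e + c = a ^ k * d * x + c" by (simp add: e ac_simps)
  ultimately have "x * e + c \<in> q ` {0..N}"
    by (rule prime_covered[OF ord_q ord_q0 cong_q0 cong_q q_prime _ \<open>prime (x * e + c)\<close>])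
  then have "x * e + c dvd (\<Prod>i\<in>{0..N}. q i)" by (auto intro: dvd_prodI)
  moreover have "(\<Prod>i\<in>{0..N}. q i) > 0" using q_prime prime_gt_0_nat by simp
  ultimately have "x * e + c \<le> (\<Prod>i\<in>{0..N}. q i)" by (rule dvd_imp_le)
  moreover have "x \<le> x * e" using \<open>e > 0\<close> by simp
  ultimately show False using x_gt by linarith
qed

theorem theorem2p2:
  fixes r N :: nat and q :: "nat \<Rightarrow> nat" and L :: "nat set" and \<beta> :: "nat \<Rightarrow> nat"
    and p P M B :: nat and A :: "nat set"
  assumes r_pos: "r > 0"
    and r1_prime: "prime (r + 1)" and not_mersenne: "\<not> mersenne_prime (r + 1)"
    and N_pos: "N > 0"
    and q_prime: "\<forall>i\<in>{0..N}. prime (q i)" and q_distinct: "inj_on q {0..N}"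
    and q_ord: "\<forall>n\<in>{1..N}. ord (q n) (r + 1) = 2 ^ n"
    and q0_ord: "ord (q 0) (r + 1) = 2 ^ N"
    and M_def: "M = (\<Prod>i\<in>{0..N}. q i)"
    and A_def: "A = {x. x > 0 \<and> [x + r = 0] (mod q 0) \<and>
                   (\<forall>n\<in>{1..N}. [(r + 1) ^ (2 ^ (n - 1)) * x + r = 0] (mod q n))}"
    and L_fin: "finite L"
    and L_primes: "\<forall>l\<in>L. prime l \<and> l > r \<and> [l = 1] (mod M)"
    and \<beta>_pos: "\<forall>l\<in>L. \<beta> l > 0"
    and B_def: "B = (\<Prod>l\<in>L. l ^ \<beta> l)"
    and p_prime: "prime p" and p_gt: "p > M" and p_A: "p \<in> A"
    and p_G: "\<forall>\<alpha>::nat. (r + 1) ^ \<alpha> * p \<in> G r"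
    and P_prime: "prime P" and P_dvd: "int P dvd int p - int r"
    and P_ndvd: "\<not> P dvd (r + 1) * B"
  shows "\<forall>\<alpha>::nat. (r + 1) ^ \<alpha> * B * p \<in> G r"
proof
  fix \<alpha> :: nat
  define X where "X = (r + 1) ^ \<alpha> * B"
  have "X > 0" using L_primes L_fin r1_prime by (auto simp: X_def B_def prime_gt_0_nat)
  have "\<not> (r < p \<and> p - r dvd X)"
  proof
    assume "r < p \<and> p - r dvd X"
    moreover have "P dvd p - r" if "r < p"
      using P_dvd that by (metis int_dvd_int_iff less_imp_le of_nat_diff)
    ultimately have "P dvd (r + 1) ^ \<alpha> * B" unfolding X_def using dvd_trans by blast
    then show False
      using P_ndvd P_prime by (metis dvd_mult prime_dvd_mult_iff prime_dvd_power dvd_mult2)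
  qed
  moreover have "\<not> prime (p * e + r)" if "e dvd X" "e > 0" for e
    using p_A L_primes p_gt that unfolding A_def M_def X_def B_def
    by (intro covered_shift_not_prime[OF r1_prime q_ord q0_ord _ _ q_prime L_fin]) auto
  ultimately have "schemmel r n \<noteq> X * p" for n
    using schemmel_eq_mult_prime_cases[OF _ p_prime \<open>X > 0\<close>] by blast
  moreover have "X * p > 0" using \<open>X > 0\<close> p_prime prime_gt_0_nat by simp
  ultimately have "X * p \<in> G r" unfolding G_def by blast
  then show "(r + 1) ^ \<alpha> * B * p \<in> G r" by (simp add: X_def)
qed

end
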